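(* Let $(X,d,\kappa)$ be a digital metric space with $X$ finite, and let $T:X\to X$ be a weakly uniformly strict digital contraction. Then $T$ is a digital contraction map, i.e., there exists $\alpha\in(0,1)$ such that $d(T(x),T(y))\le\alpha\,d(x,y)$ for all $x,y\in X$.
   Context: A digital metric space is a triple $(X,d,\kappa)$ where $X\subset\mathbb{Z}^n$ for some positive integer $n$, $\kappa$ is an adjacency relation on $X$, and $d$ is a metric on $X$. $T:X\to X$ is a weakly uniformly strict digital contraction if for every $\varepsilon>0$ there exists $\delta>0$ such that for all $x,y\in X$, $\varepsilon\le d(x,y)<\varepsilon+\delta$ implies $d(T(x),T(y))<\varepsilon$. *)

theory Defs
  imports "HOL-Analysis.Analysis"
begin

definition adjacency_on :: "'a set \<Rightarrow> ('a \<Rightarrow> 'a \<Rightarrow> bool) \<Rightarrow> bool" where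
  "adjacency_on X \<kappa> \<longleftrightarrow> (\<forall>x y. \<kappa> x y \<longrightarrow> x \<in> X \<and> y \<in> X) \<and>
     (\<forall>x\<in>X. \<not> \<kappa> x x) \<and> (\<forall>x y. \<kappa> x y \<longrightarrow> \<kappa> y x)"

definition digital_metric_space ::
  "(int ^ 'n) set \<Rightarrow> (int ^ 'n \<Rightarrow> int ^ 'n \<Rightarrow> real) \<Rightarrow> (int ^ 'n \<Rightarrow> int ^ 'n \<Rightarrow> bool) \<Rightarrow> bool" where
  "digital_metric_space X d \<kappa> \<longleftrightarrow> Metric_space X d \<and> adjacency_on X \<kappa>"

definition weakly_uniformly_strict_digital_contraction ::
  "'a set \<Rightarrow> ('a \<Rightarrow> 'a \<Rightarrow> real) \<Rightarrow> ('a \<Rightarrow> 'a) \<Rightarrow> bool" where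
  "weakly_uniformly_strict_digital_contraction X d T \<longleftrightarrow>
     T ` X \<subseteq> X \<and>
     (\<forall>\<epsilon>>0. \<exists>\<delta>>0. \<forall>x\<in>X. \<forall>y\<in>X.
        \<epsilon> \<le> d x y \<and> d x y < \<epsilon> + \<delta> \<longrightarrow> d (T x) (T y) < \<epsilon>)"

definition digital_contraction_map ::
  "'a set \<Rightarrow> ('a \<Rightarrow> 'a \<Rightarrow> real) \<Rightarrow> ('a \<Rightarrow> 'a) \<Rightarrow> bool" where
  "digital_contraction_map X d T \<longleftrightarrow>
     T ` X \<subseteq> X \<and>
     (\<exists>\<alpha>. 0 < \<alpha> \<and> \<alpha> < 1 \<and> (\<forall>x\<in>X. \<forall>y\<in>X. d (T x) (T y) \<le> \<alpha> * d x y))"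

end

theory Submission
  imports Defs
begin

text \<open>Taking \<open>\<epsilon> = d x y\<close> in the definition shows that \<open>T\<close> strictly shrinks every
nonzero distance. On a finite space there are only finitely many ratios
\<open>d (T x) (T y) / d x y\<close>, so their maximum is a uniform contraction constant below 1.\<close>

lemma (in Metric_space) weakly_uniformly_strict_contraction_dist_less:
  assumes "weakly_uniformly_strict_digital_contraction M d T"
    and "x \<in> M" "y \<in> M" "x \<noteq> y"
  shows "d (T x) (T y) < d x y"
proof -
  have "d x y > 0"
    using assms(2-4) by (simp add: order_less_le)
  then obtain \<delta> where "\<delta> > 0" and "\<forall>u\<in>M. \<forall>v\<in>M.
      d x y \<le> d u v \<and> d u v < d x y + \<delta> \<longrightarrow> d (T u) (T v) < d x y"
    using assms(1) unfolding weakly_uniformly_strict_digital_contraction_def by blast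
  then show ?thesis
    using assms(2,3) by auto
qed

lemma (in Metric_space) finite_strictly_shrinking_imp_contraction:
  assumes "finite M" and "T ` M \<subseteq> M"
    and shrink: "\<And>x y. x \<in> M \<Longrightarrow> y \<in> M \<Longrightarrow> x \<noteq> y \<Longrightarrow> d (T x) (T y) < d x y"
  shows "digital_contraction_map M d T"
proof -
  define ratios where
    "ratios = (\<lambda>(x, y). d (T x) (T y) / d x y) ` {(x, y) \<in> M \<times> M. x \<noteq> y}"
  \<comment> \<open>Inserting \<open>1/2\<close> makes the set nonempty (e.g. for a singleton space) and \<open>\<alpha>\<close> positive.\<close>
  define \<alpha> where "\<alpha> = Max (insert (1/2) ratios)"
  have "finite ratios"
    unfolding ratios_def using assms(1) by (auto intro: finite_subset[of _ "M \<times> M"])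
  have ratios_less_1: "r < 1" if "r \<in> ratios" for r
  proof -
    obtain x y where "x \<in> M" "y \<in> M" "x \<noteq> y" and r: "r = d (T x) (T y) / d x y"
      using \<open>r \<in> ratios\<close> unfolding ratios_def by auto
    then have "d x y > 0"
      by (simp add: order_less_le)
    moreover have "d (T x) (T y) < d x y"
      using shrink \<open>x \<in> M\<close> \<open>y \<in> M\<close> \<open>x \<noteq> y\<close> by blast
    ultimately show ?thesis
      unfolding r by (simp add: divide_less_eq)
  qed
  have "1/2 \<le> \<alpha>"
    unfolding \<alpha>_def using \<open>finite ratios\<close> by (intro Max_ge) auto
  moreover have "\<alpha> < 1"
    unfolding \<alpha>_def using \<open>finite ratios\<close> ratios_less_1 by (subst Max_less_iff) auto
  moreover have "d (T x) (T y) \<le> \<alpha> * d x y" if "x \<in> M" "y \<in> M" for x y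
  proof (cases "x = y")
    case True
    then show ?thesis
      using that assms(2) by auto
  next
    case False
    then have "d (T x) (T y) / d x y \<in> ratios"
      unfolding ratios_def using that by force
    then have "d (T x) (T y) / d x y \<le> \<alpha>"
      unfolding \<alpha>_def using \<open>finite ratios\<close> by simp
    moreover have "d x y > 0"
      using that False by (simp add: order_less_le)
    ultimately show ?thesis
      by (simp add: divide_le_eq mult.commute)
  qed
  ultimately show ?thesis
    unfolding digital_contraction_map_def using assms(2)
    by (intro conjI exI[of _ \<alpha>]) auto
qed

theorem corollary8p3:
  fixes X :: "(int ^ 'n) set" and d :: "int ^ 'n \<Rightarrow> int ^ 'n \<Rightarrow> real"
    and \<kappa> :: "int ^ 'n \<Rightarrow> int ^ 'n \<Rightarrow> bool" and T :: "int ^ 'n \<Rightarrow> int ^ 'n"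
  assumes "digital_metric_space X d \<kappa>"
    and "finite X"
    and "weakly_uniformly_strict_digital_contraction X d T"
  shows "digital_contraction_map X d T"
proof -
  interpret Metric_space X d
    using assms(1) by (simp add: digital_metric_space_def)
  have "T ` X \<subseteq> X"
    using assms(3) by (simp add: weakly_uniformly_strict_digital_contraction_def)
  then show ?thesis
    using finite_strictly_shrinking_imp_contraction assms(2)
      weakly_uniformly_strict_contraction_dist_less[OF assms(3)] by blast
qed

end
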